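(* Let $\nu\in\mathbb{C}$. The initial equation admits a unique formal fundamental matrix at the origin of the form $\hat\Phi(x,0)=\hat H(x)\,x^{\Lambda}\exp(-Q/x)$ with $Q=\mathrm{diag}(1,2,0)$, $\Lambda=\mathrm{diag}(0,\nu-2,\nu-4)$ and $$\hat H(x)=\begin{pmatrix}1&x^2\hat\varphi(x)&\frac{x^4\hat\psi(x)}2\\0&1&-\frac{x^2}2\\0&0&1\end{pmatrix},$$ where: (1) if $\nu$ is a non-positive integer, $\hat\psi(x)=1+\nu x+\nu(\nu+1)x^2+\dots+(-1)^\nu(-\nu)!\,x^{-\nu}$ and $\hat\varphi(x)=1-\nu x+\nu(\nu+1)x^2-\dots+(-\nu)!\,x^{-\nu}$ are polynomials (hence analytic at the origin); (2) otherwise $\hat\psi(x)=\sum_{n\ge0}(\nu)^{(n)}x^n$ and $\hat\varphi(x)=\sum_{n\ge0}(-1)^n(\nu)^{(n)}x^n$ are divergent series.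
   Context: $\partial=d/dx$; the initial equation is $L_3L_2L_1y=0$ with $L_1=\partial-\frac1{x^2}$, $L_2=\partial-\frac{\nu-2}{x}-\frac2{x^2}$, $L_3=\partial-\frac{\nu-4}x$. A (formal) fundamental matrix of the equation means one of the system $Y'=A(x)Y$ with $A(x)=\begin{pmatrix}1/x^2&1&0\\0&\frac{\nu-2}x+\frac2{x^2}&1\\0&0&\frac{\nu-4}x\end{pmatrix}$ (equivalently $Y=(y,L_1y,L_2L_1y)^T$). $(\nu)^{(n)}=\nu(\nu+1)\cdots(\nu+n-1)$, $(\nu)^{(0)}=1$. *)

theory Defs
  imports "HOL-Analysis.Analysis" "HOL-Library.Nonpos_Ints"
begin

type_synonym fpsmat = "complex fps ^3^3"

definition mat3 :: "'a::zero \<Rightarrow> 'a \<Rightarrow> 'a \<Rightarrow> 'a \<Rightarrow> 'a \<Rightarrow> 'a \<Rightarrow> 'a \<Rightarrow> 'a \<Rightarrow> 'a \<Rightarrow> 'a^3^3" where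
  "mat3 a11 a12 a13 a21 a22 a23 a31 a32 a33 =
     vector [vector [a11, a12, a13], vector [a21, a22, a23], vector [a31, a32, a33]]"

text \<open>x^2 A(x), where A is the matrix of the system Y' = A Y (entries are polynomials).\<close>
definition x2A :: "complex \<Rightarrow> fpsmat" where
  "x2A \<nu> = mat3 1 (fps_X^2) 0
                0 (fps_const (\<nu> - 2) * fps_X + 2) (fps_X^2)
                0 0 (fps_const (\<nu> - 4) * fps_X)"

definition Qmat :: fpsmat where
  "Qmat = mat3 1 0 0  0 2 0  0 0 0"

definition Lmat :: "complex \<Rightarrow> fpsmat" where
  "Lmat \<nu> = mat3 0 0 0  0 (fps_const (\<nu> - 2)) 0  0 0 (fps_const (\<nu> - 4))"

definition mat_deriv :: "fpsmat \<Rightarrow> fpsmat" where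
  "mat_deriv H = (\<chi> i j. fps_deriv (H $ i $ j))"

definition mat_fps_scale :: "complex fps \<Rightarrow> fpsmat \<Rightarrow> fpsmat" where
  "mat_fps_scale c H = (\<chi> i j. c * (H $ i $ j))"

definition mat_const_term :: "fpsmat \<Rightarrow> complex^3^3" where
  "mat_const_term H = (\<chi> i j. fps_nth (H $ i $ j) 0)"

text \<open>
  Phi = H(x) x^Lambda exp(-Q/x) is a formal solution of Y' = A(x) Y (Lambda, Q diagonal, so
  x^Lambda and exp(-Q/x) commute) iff  H' + H (Lambda/x + Q/x^2) = A H,  i.e. after multiplying
  by x^2:  x^2 H' = (x^2 A) H - H (x Lambda + Q).  It is fundamental iff H(0) is invertible.
\<close>
definition formal_fundamental :: "complex \<Rightarrow> fpsmat \<Rightarrow> bool" where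
  "formal_fundamental \<nu> H \<longleftrightarrow>
     invertible (mat_const_term H) \<and>
     mat_fps_scale (fps_X^2) (mat_deriv H) =
       x2A \<nu> ** H - H ** (mat_fps_scale fps_X (Lmat \<nu>) + Qmat)"

definition psi_hat :: "complex \<Rightarrow> complex fps" where
  "psi_hat \<nu> = Abs_fps (\<lambda>n. pochhammer \<nu> n)"

definition phi_hat :: "complex \<Rightarrow> complex fps" where
  "phi_hat \<nu> = Abs_fps (\<lambda>n. (-1)^n * pochhammer \<nu> n)"

definition H_hat :: "complex \<Rightarrow> fpsmat" where
  "H_hat \<nu> = mat3 1 (fps_X^2 * phi_hat \<nu>) (fps_const (1/2) * fps_X^4 * psi_hat \<nu>)
                  0 1 (- fps_const (1/2) * fps_X^2)
                  0 0 1"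

end

theory Submission
  imports Defs
begin

text \<open>Since \<open>Q\<close> and \<open>\<Lambda>\<close> are diagonal with the same diagonal \<open>d = diag(1, 2 + (\<nu>-2)x, (\<nu>-4)x)\<close>
  as the diagonal part of \<open>x\<^sup>2A\<close>, the equation \<open>x\<^sup>2H' = x\<^sup>2AH - H(x\<Lambda> + Q)\<close> becomes
  \<open>x\<^sup>2h\<^sub>i\<^sub>j' = (d\<^sub>i - d\<^sub>j) h\<^sub>i\<^sub>j + x\<^sup>2h\<^sub>i\<^sub>+\<^sub>1\<^sub>,\<^sub>j\<close>. The constant terms \<open>1, 2, 0\<close> of the \<open>d\<^sub>i\<close>
  are distinct, so an equation \<open>x\<^sup>2u' = cu\<close> with \<open>c(0) \<noteq> 0\<close> forces \<open>u = 0\<close>; solving row by row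
  from the bottom, \<open>H\<close> is determined by \<open>H(0) = I\<close>. The entries \<open>\<hat>\<phi>\<close> and \<open>\<hat>\<psi>\<close> of the solution
  satisfy \<open>f = 1 \<plusminus> (\<nu>xf + x\<^sup>2f')\<close>, whose coefficients are \<open>(\<plusminus>1)\<^sup>n(\<nu>)\<^sup>(\<^sup>n\<^sup>)\<close>: they terminate when
  \<open>\<nu> = -m\<close>, and otherwise grow factorially, so the ratio test gives radius \<open>0\<close>.\<close>

lemma fps_X_square_deriv_eq_mult_imp_zero:
  fixes u c :: "'a::idom fps"
  assumes c0: "fps_nth c 0 \<noteq> 0" and eq: "fps_X^2 * fps_deriv u = c * u"
  shows "u = 0"
proof -
  have "fps_nth u n = 0" for n
  proof (induction n rule: less_induct)
    case (less n)
    have lhs: "fps_nth (fps_X^2 * fps_deriv u) n = 0"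
    proof (cases "n < 2")
      case False
      then have "fps_nth u (n - 2 + 1) = 0"
        using less[of "n - 1"] by (simp add: Suc_diff_Suc numeral_2_eq_2)
      with False show ?thesis by (simp add: fps_X_power_mult_nth)
    qed (simp add: fps_X_power_mult_nth)
    have "fps_nth (c * u) n = fps_nth c 0 * fps_nth u n + (\<Sum>i=1..n. fps_nth c i * fps_nth u (n - i))"
      by (simp add: fps_mult_nth sum.atLeast_Suc_atMost)
    also have "(\<Sum>i=1..n. fps_nth c i * fps_nth u (n - i)) = 0"
      by (intro sum.neutral) (use less in auto)
    finally have "fps_nth c 0 * fps_nth u n = 0"
      using lhs eq by simp
    with c0 show ?case by simp
  qed
  then show ?thesis by (simp add: fps_ext)
qed

lemma Abs_fps_eq_fps_of_poly:
  assumes "\<And>n. m < n \<Longrightarrow> f n = 0"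
  shows "Abs_fps f = fps_of_poly (\<Sum>k\<le>m. monom (f k) k)"
  by (rule fps_ext) (use assms in \<open>auto simp: coeff_sum coeff_monom not_le\<close>)

definition pochhammer_series :: "'a::comm_ring_1 \<Rightarrow> 'a \<Rightarrow> 'a fps" where
  "pochhammer_series c \<nu> = Abs_fps (\<lambda>n. c^n * pochhammer \<nu> n)"

lemma psi_hat_eq: "psi_hat \<nu> = pochhammer_series 1 \<nu>"
  by (simp add: psi_hat_def pochhammer_series_def)

lemma phi_hat_eq: "phi_hat \<nu> = pochhammer_series (-1) \<nu>"
  by (simp add: phi_hat_def pochhammer_series_def)

lemma pochhammer_series_ode:
  fixes c \<nu> :: "'a::comm_ring_1"
  defines "f \<equiv> pochhammer_series c \<nu>"
  shows "f = 1 + fps_const c * (fps_const \<nu> * fps_X * f + fps_X^2 * fps_deriv f)"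
proof (rule fps_ext)
  fix n
  show "fps_nth f n = fps_nth (1 + fps_const c * (fps_const \<nu> * fps_X * f + fps_X^2 * fps_deriv f)) n"
  proof (cases n)
    case (Suc k)
    have "fps_nth f (Suc k) = c * ((\<nu> + of_nat k) * (c^k * pochhammer \<nu> k))"
      by (simp add: f_def pochhammer_series_def pochhammer_rec' algebra_simps)
    then show ?thesis
      using Suc by (cases k) (simp_all add: f_def pochhammer_series_def fps_X_power_mult_nth
          mult.assoc algebra_simps)
  qed (simp add: f_def pochhammer_series_def fps_X_power_mult_nth mult.assoc)
qed

lemma pochhammer_series_neg_of_nat:
  fixes c :: "'a::idom"
  shows "pochhammer_series c (- of_nat m) = fps_of_poly (\<Sum>k\<le>m. monom (c^k * pochhammer (- of_nat m) k) k)"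
  unfolding pochhammer_series_def
  by (rule Abs_fps_eq_fps_of_poly) (simp add: pochhammer_of_nat_eq_0_lemma)

lemma pochhammer_neg_of_nat_self:
  "pochhammer (- of_nat m :: 'a::{comm_ring_1,ring_char_0}) m = (-1)^m * fact m"
  by (simp add: pochhammer_minus pochhammer_fact)

lemma fps_conv_radius_pochhammer_series:
  fixes c \<nu> :: complex
  assumes \<nu>: "\<nu> \<notin> \<int>\<^sub>\<le>\<^sub>0" and c: "c \<noteq> 0"
  shows "fps_conv_radius (pochhammer_series c \<nu>) = 0"
  unfolding fps_conv_radius_def pochhammer_series_def fps_nth_Abs_fps
proof (rule conv_radius_ratio_limit_ereal)
  have nz: "pochhammer \<nu> n \<noteq> 0" for n
    using \<nu> by (auto simp: pochhammer_eq_0_iff)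
  then show "\<forall>\<^sub>F n in sequentially. c^n * pochhammer \<nu> n \<noteq> 0"
    using c by simp
  have ratio: "norm (c^n * pochhammer \<nu> n) / norm (c^Suc n * pochhammer \<nu> (Suc n))
      = inverse (norm c * norm (\<nu> + of_nat n))" for n
    using nz[of n] c unfolding pochhammer_rec' power_Suc norm_mult norm_power
    by (simp add: field_simps)
  have "filterlim (\<lambda>n. - norm \<nu> + real n) at_top sequentially"
    by (rule filterlim_tendsto_add_at_top[OF tendsto_const filterlim_real_sequentially])
  then have "filterlim (\<lambda>n. norm c * (- norm \<nu> + real n)) at_top sequentially"
    using c by (intro filterlim_tendsto_pos_mult_at_top[OF tendsto_const]) auto
  moreover have "norm c * (- norm \<nu> + real n) \<le> norm c * norm (\<nu> + of_nat n)" for n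
    using norm_triangle_ineq4[of "\<nu> + of_nat n" \<nu>] by (intro mult_left_mono) auto
  ultimately have "filterlim (\<lambda>n. norm c * norm (\<nu> + of_nat n)) at_top sequentially"
    by (auto intro: filterlim_at_top_mono)
  then have "(\<lambda>n. inverse (norm c * norm (\<nu> + of_nat n))) \<longlonglongrightarrow> 0"
    by (rule tendsto_inverse_0_at_top)
  then show "(\<lambda>n. ereal (norm (c^n * pochhammer \<nu> n) / norm (c^Suc n * pochhammer \<nu> (Suc n))))
      \<longlonglongrightarrow> 0"
    unfolding ratio zero_ereal_def by (simp only: lim_ereal)
qed

definition exponent_diag :: "complex \<Rightarrow> 3 \<Rightarrow> complex fps" where
  "exponent_diag \<nu> i = (mat_fps_scale fps_X (Lmat \<nu>) + Qmat) $ i $ i"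

definition next_row :: "fpsmat \<Rightarrow> 3 \<Rightarrow> 3 \<Rightarrow> complex fps" where
  "next_row H i j = (if i = 1 then H $ 2 $ j else if i = 2 then H $ 3 $ j else 0)"

definition entrywise_system :: "complex \<Rightarrow> fpsmat \<Rightarrow> bool" where
  "entrywise_system \<nu> H \<longleftrightarrow> (\<forall>i j. fps_X^2 * fps_deriv (H $ i $ j) =
     (exponent_diag \<nu> i - exponent_diag \<nu> j) * H $ i $ j + fps_X^2 * next_row H i j)"

lemma exponent_diag_simps:
  "exponent_diag \<nu> 1 = 1"
  "exponent_diag \<nu> 2 = fps_X * fps_const (\<nu> - 2) + 2"
  "exponent_diag \<nu> 3 = fps_X * fps_const (\<nu> - 4)"
  by (simp_all add: exponent_diag_def mat_fps_scale_def Lmat_def Qmat_def mat3_def)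

lemma exponent_diag_const_term_inj:
  assumes "fps_nth (exponent_diag \<nu> i) 0 = fps_nth (exponent_diag \<nu> j) 0"
  shows "i = j"
  using assms exhaust_3[of i] exhaust_3[of j] by (auto simp: exponent_diag_simps)

lemma formal_system_iff_entrywise:
  "mat_fps_scale (fps_X^2) (mat_deriv H) = x2A \<nu> ** H - H ** (mat_fps_scale fps_X (Lmat \<nu>) + Qmat)
   \<longleftrightarrow> entrywise_system \<nu> H"
  unfolding entrywise_system_def
  by (simp add: vec_eq_iff forall_3 matrix_matrix_mult_def sum_3 mat3_def mat_fps_scale_def
      mat_deriv_def x2A_def Lmat_def Qmat_def exponent_diag_simps next_row_def algebra_simps)

lemma entrywise_system_diff:
  assumes "entrywise_system \<nu> H" and "entrywise_system \<nu> G"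
  shows "entrywise_system \<nu> (H - G)"
  using assms unfolding entrywise_system_def next_row_def
  by (simp add: algebra_simps)

lemma entrywise_system_const_term_zero:
  assumes sys: "entrywise_system \<nu> D" and D0: "mat_const_term D = 0"
  shows "D = 0"
proof -
  have entry: "D $ i $ j = 0" if below: "next_row D i j = 0" for i j
  proof (cases "i = j")
    case True
    have "fps_X^2 * fps_deriv (D $ i $ j) = 0"
      using sys below True unfolding entrywise_system_def by simp
    then have "D $ i $ j = fps_const (fps_nth (D $ i $ j) 0)"
      by (simp del: fps_deriv_eq_0_iff) (simp add: fps_deriv_eq_0_iff)
    also have "fps_nth (D $ i $ j) 0 = 0"
      using D0 by (simp add: vec_eq_iff mat_const_term_def)
    finally show ?thesis by simp
  next
    case False
    show ?thesis
    proof (rule fps_X_square_deriv_eq_mult_imp_zero)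
      show "fps_nth (exponent_diag \<nu> i - exponent_diag \<nu> j) 0 \<noteq> 0"
        using False exponent_diag_const_term_inj by fastforce
      show "fps_X^2 * fps_deriv (D $ i $ j) = (exponent_diag \<nu> i - exponent_diag \<nu> j) * D $ i $ j"
        using sys below unfolding entrywise_system_def by simp
    qed
  qed
  have row3: "D $ 3 $ j = 0" for j
    by (rule entry) (simp add: next_row_def)
  have row2: "D $ 2 $ j = 0" for j
    by (rule entry) (simp add: next_row_def row3)
  have row1: "D $ 1 $ j = 0" for j
    by (rule entry) (simp add: next_row_def row2)
  show ?thesis
    by (simp add: vec_eq_iff forall_3 row1 row2 row3)
qed

lemma H_hat_entries:
  "H_hat \<nu> $ 1 $ 1 = 1" "H_hat \<nu> $ 1 $ 2 = fps_X^2 * phi_hat \<nu>"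
  "H_hat \<nu> $ 1 $ 3 = fps_const (1/2) * fps_X^4 * psi_hat \<nu>"
  "H_hat \<nu> $ 2 $ 1 = 0" "H_hat \<nu> $ 2 $ 2 = 1" "H_hat \<nu> $ 2 $ 3 = - fps_const (1/2) * fps_X^2"
  "H_hat \<nu> $ 3 $ 1 = 0" "H_hat \<nu> $ 3 $ 2 = 0" "H_hat \<nu> $ 3 $ 3 = 1"
  by (simp_all add: H_hat_def mat3_def)

lemma H_hat_const_term: "mat_const_term (H_hat \<nu>) = mat 1"
  by (simp add: vec_eq_iff forall_3 mat_const_term_def H_hat_entries mat_def
      fps_X_power_mult_nth mult.assoc)

lemma H_hat_entrywise_system: "entrywise_system \<nu> (H_hat \<nu>)"
proof -
  have fc: "fps_const (\<nu> - 2) = fps_const \<nu> - 2" "fps_const (\<nu> - 4) = fps_const \<nu> - 4"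
    "fps_const (1/2) * 2 = (1 :: complex fps)"
    by (simp_all add: fps_numeral_fps_const)
  let ?\<phi> = "phi_hat \<nu>" and ?\<psi> = "psi_hat \<nu>"
  note \<phi> = pochhammer_series_ode[of "-1" \<nu>, folded phi_hat_eq,
      unfolded fps_const_neg[symmetric] fps_const_1_eq_1]
  note \<psi> = pochhammer_series_ode[of 1 \<nu>, folded psi_hat_eq, unfolded fps_const_1_eq_1]
  have e12: "fps_X^2 * fps_deriv (fps_X^2 * ?\<phi>) =
      (1 - (fps_X * fps_const (\<nu> - 2) + 2)) * (fps_X^2 * ?\<phi>) + fps_X^2"
    unfolding fc by (simp add: fps_deriv_power flip: fps_numeral_fps_const del: fps_const_neg) (use \<phi> in algebra)
  have e13: "fps_X^2 * fps_deriv (fps_const (1/2) * fps_X^4 * ?\<psi>) =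
      (1 - fps_X * fps_const (\<nu> - 4)) * (fps_const (1/2) * fps_X^4 * ?\<psi>)
      + fps_X^2 * (- fps_const (1/2) * fps_X^2)"
    unfolding fc by (simp add: fps_deriv_power flip: fps_numeral_fps_const del: fps_const_neg) (use \<psi> fc(3) in algebra)
  have e23: "fps_X^2 * fps_deriv (- fps_const (1/2) * fps_X^2) =
      (fps_X * fps_const (\<nu> - 2) + 2 - fps_X * fps_const (\<nu> - 4)) * (- fps_const (1/2) * fps_X^2)
      + fps_X^2"
  proof -
    have "fps_deriv (- fps_const (1/2) * fps_X^2) = - fps_const (1/2) * (2 * fps_X :: complex fps)"
      by (simp add: fps_deriv_power flip: fps_numeral_fps_const del: fps_const_neg)
    then show ?thesis
      unfolding fc by (simp only:) (use fc(3) in algebra)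
  qed
  show ?thesis
    unfolding entrywise_system_def using e12 e13 e23
    by (simp add: forall_3 exponent_diag_simps next_row_def H_hat_entries)
qed

lemma H_hat_unique:
  "formal_fundamental \<nu> H \<and> mat_const_term H = mat 1 \<longleftrightarrow> H = H_hat \<nu>"
proof
  have "invertible (mat 1 :: complex^3^3)"
    by (simp add: invertible_def exI[of _ "mat 1"])
  then show "formal_fundamental \<nu> H \<and> mat_const_term H = mat 1" if "H = H_hat \<nu>"
    using that H_hat_const_term H_hat_entrywise_system
    by (simp add: formal_fundamental_def formal_system_iff_entrywise)
next
  assume H: "formal_fundamental \<nu> H \<and> mat_const_term H = mat 1"
  have "entrywise_system \<nu> (H - H_hat \<nu>)"
    using H H_hat_entrywise_system
    by (intro entrywise_system_diff) (simp_all add: formal_fundamental_def formal_system_iff_entrywise)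
  moreover have "mat_const_term (H - H_hat \<nu>) = 0"
    using H H_hat_const_term by (simp add: vec_eq_iff mat_const_term_def)
  ultimately have "H - H_hat \<nu> = 0"
    by (rule entrywise_system_const_term_zero)
  then show "H = H_hat \<nu>" by simp
qed

theorem mainTheorem8:
  fixes \<nu> :: complex
  shows "(\<forall>H. (formal_fundamental \<nu> H \<and> mat_const_term H = mat 1) \<longleftrightarrow> H = H_hat \<nu>)
    \<and> (\<forall>m::nat. \<nu> = - of_nat m \<longrightarrow>
          psi_hat \<nu> = fps_of_poly (\<Sum>k\<le>m. monom (pochhammer \<nu> k) k)
        \<and> phi_hat \<nu> = fps_of_poly (\<Sum>k\<le>m. monom ((-1)^k * pochhammer \<nu> k) k)
        \<and> pochhammer \<nu> m = (-1)^m * fact m)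
    \<and> (\<nu> \<notin> \<int>\<^sub>\<le>\<^sub>0 \<longrightarrow> fps_conv_radius (psi_hat \<nu>) = 0 \<and> fps_conv_radius (phi_hat \<nu>) = 0)"
proof (intro conjI allI impI)
  show "(formal_fundamental \<nu> H \<and> mat_const_term H = mat 1) \<longleftrightarrow> H = H_hat \<nu>" for H
    by (rule H_hat_unique)
next
  fix m :: nat
  assume \<nu>: "\<nu> = - of_nat m"
  show "psi_hat \<nu> = fps_of_poly (\<Sum>k\<le>m. monom (pochhammer \<nu> k) k)"
    by (simp add: \<nu> psi_hat_eq pochhammer_series_neg_of_nat)
  show "phi_hat \<nu> = fps_of_poly (\<Sum>k\<le>m. monom ((-1)^k * pochhammer \<nu> k) k)"
    by (simp add: \<nu> phi_hat_eq pochhammer_series_neg_of_nat)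
  show "pochhammer \<nu> m = (-1)^m * fact m"
    unfolding \<nu> by (rule pochhammer_neg_of_nat_self)
next
  assume "\<nu> \<notin> \<int>\<^sub>\<le>\<^sub>0"
  then show "fps_conv_radius (psi_hat \<nu>) = 0" "fps_conv_radius (phi_hat \<nu>) = 0"
    by (simp_all add: psi_hat_eq phi_hat_eq fps_conv_radius_pochhammer_series)
qed

end
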